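(* Consider the mining game with $N\ge 2$ miners, costs-per-hash $0<c_1\le c_2\le\dots\le c_N$, reward $R>0$ and capacity parameter $\gamma\ge 0$. There exists a unique equilibrium hash rate profile $h^*$. Moreover, there is an integer $n$ with $2\le n\le N$ such that $$h_i^*=\begin{cases}\dfrac{H^*(R-c_iH^* )}{R+\gamma (H^* )^2}, & 1\le i\le n,\\[2mm] 0, & n<i\le N,\end{cases}$$ and the equilibrium aggregate hash rate $H^*=\sum_{j=1}^N h_j^*$ is $$H^*=\begin{cases}\dfrac{\sqrt{(c^{(n)})^2+4(n-1)R\gamma}-c^{(n)}}{2\gamma}, & \gamma>0,\\[2mm] \dfrac{(n-1)R}{c^{(n)}}, & \gamma=0,\end{cases}$$ where $c^{(n)}=\sum_{i=1}^n c_i$.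
   Context: Mining game: there are $N\ge2$ miners, indexed so that their costs-per-hash satisfy $0<c_1\le\dots\le c_N$ (in the paper these are the costs $c_i=c_i(\beta_i)$ resulting from an arbitrary fixed hardware-investment profile $\beta\in[0,1]^N$). Each miner $i$ chooses a hash rate $h_i\ge 0$, and $H=\sum_{j=1}^N h_j$. The payoff of miner $i$ is $\pi_i(h_i;h_{-i})=\frac{h_i}{H}R-c_ih_i-\frac{\gamma}{2}h_i^2$ if $H>0$ and $\pi_i=0$ if $H=0$. An equilibrium hash rate profile is a vector $h^*\in[0,\infty)^N$ such that $\pi_i(h_i^*;h_{-i}^* )=\sup_{h_i\ge0}\pi_i(h_i;h_{-i}^* )$ for every $i$. *)

theory Defs
  imports "HOL-Analysis.Analysis"
begin

text \<open>Miners are indexed by 1..N; a hash rate profile is a function nat => real,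
  only its values on 1..N matter.\<close>

definition agg :: "nat \<Rightarrow> (nat \<Rightarrow> real) \<Rightarrow> real" where
  "agg N h = (\<Sum>j=1..N. h j)"

definition payoff :: "nat \<Rightarrow> (nat \<Rightarrow> real) \<Rightarrow> real \<Rightarrow> real \<Rightarrow> nat \<Rightarrow> (nat \<Rightarrow> real) \<Rightarrow> real" where
  "payoff N c R \<gamma> i h =
     (if agg N h > 0 then h i / agg N h * R - c i * h i - \<gamma> / 2 * (h i)^2 else 0)"

definition is_equilibrium :: "nat \<Rightarrow> (nat \<Rightarrow> real) \<Rightarrow> real \<Rightarrow> real \<Rightarrow> (nat \<Rightarrow> real) \<Rightarrow> bool" where
  "is_equilibrium N c R \<gamma> h \<longleftrightarrow>
     (\<forall>i\<in>{1..N}. h i \<ge> 0) \<and>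
     (\<forall>i\<in>{1..N}. payoff N c R \<gamma> i h = (SUP x\<in>{0..}. payoff N c R \<gamma> i (h(i := x))))"

end

theory Submission
  imports Defs
begin

text \<open>
  Against a total rate \<open>S > 0\<close> of the other miners, the payoff
  \<open>x \<mapsto> x R / (S + x) - c x - \<gamma> x\<^sup>2 / 2\<close> is concave on \<open>[0, \<infinity>)\<close>, so a best
  response is characterised by its first-order condition; in terms of the aggregate
  \<open>H = S + x\<close> this reads \<open>x (R + \<gamma> H\<^sup>2) = H max 0 (R - c H)\<close>. For \<open>S = 0\<close>
  there is no best response at all. Hence the equilibria are exactly the profiles
  \<open>h\<^sub>i = H max 0 (R - c\<^sub>i H) / (R + \<gamma> H\<^sup>2)\<close> whose aggregate \<open>H > 0\<close> solves
  \<open>\<Sum>\<^sub>i max 0 (R - c\<^sub>i H) = R + \<gamma> H\<^sup>2\<close>. The left-hand side is non-increasing in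
  \<open>H\<close> and strictly decreasing where positive, the right-hand side is positive and
  non-decreasing, so there is exactly one root, and it exists by the intermediate value
  theorem. With sorted costs the active miners form an initial segment \<open>1..n\<close>, and
  the equation becomes the quadratic \<open>\<gamma> H\<^sup>2 + (c\<^sub>1 + \<dots> + c\<^sub>n) H = (n - 1) R\<close>.
\<close>

lemma agg_fun_upd:
  assumes "i \<in> {1..N}"
  shows "agg N (h(i := x)) = agg N h - h i + x"
proof -
  have "(\<Sum>j\<in>{1..N} - {i}. (h(i := x)) j) = (\<Sum>j\<in>{1..N} - {i}. h j)"
    by (rule sum.cong) auto
  then show ?thesis
    unfolding agg_def sum.remove[OF finite_atLeastAtMost assms] by simp
qed

lemma agg_minus_nonneg:
  assumes "i \<in> {1..N}" and "\<forall>j\<in>{1..N}. h j \<ge> 0"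
  shows "agg N h - h i \<ge> 0"
  using assms member_le_sum[of i "{1..N}" h] by (simp add: agg_def)

definition contest_payoff :: "real \<Rightarrow> real \<Rightarrow> real \<Rightarrow> real \<Rightarrow> real \<Rightarrow> real" where
  "contest_payoff R c \<gamma> S x = (if S + x > 0 then x / (S + x) * R - c * x - \<gamma> / 2 * x\<^sup>2 else 0)"

lemma payoff_fun_upd:
  assumes "i \<in> {1..N}"
  shows "payoff N c R \<gamma> i (h(i := x)) = contest_payoff R (c i) \<gamma> (agg N h - h i) x"
  using assms by (simp add: payoff_def contest_payoff_def agg_fun_upd)

lemma payoff_eq_contest_payoff:
  assumes "i \<in> {1..N}"
  shows "payoff N c R \<gamma> i h = contest_payoff R (c i) \<gamma> (agg N h - h i) (h i)"
  using payoff_fun_upd[OF assms, of c R \<gamma> h "h i"] by simp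

lemma contest_payoff_le:
  assumes "S \<ge> 0" "x \<ge> 0" "c \<ge> 0" "\<gamma> \<ge> 0" "R \<ge> 0"
  shows "contest_payoff R c \<gamma> S x \<le> R"
proof -
  have "x / (S + x) * R - c * x - \<gamma> / 2 * x\<^sup>2 \<le> R" if "S + x > 0"
  proof -
    have "x / (S + x) * R \<le> R"
      using assms that by (simp add: divide_le_eq algebra_simps)
    moreover have "c * x \<ge> 0" "\<gamma> / 2 * x\<^sup>2 \<ge> 0"
      using assms by simp_all
    ultimately show ?thesis by linarith
  qed
  then show ?thesis
    using assms by (simp add: contest_payoff_def)
qed

lemma contest_payoff_has_real_derivative:
  assumes "S + x > 0"
  shows "(contest_payoff R c \<gamma> S has_real_derivative R * S / (S + x)\<^sup>2 - c - \<gamma> * x) (at x)"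
proof (rule has_field_derivative_transform_within_open[where S = "{- S<..}"])
  have "((\<lambda>x. x / (S + x) * R - c * x - \<gamma> / 2 * x\<^sup>2) has_real_derivative
      (1 * (S + x) - x * (0 + 1)) / ((S + x) * (S + x)) * R - c * 1 - \<gamma> / 2 * (2 * x ^ 1 * 1)) (at x)"
    using assms by (intro derivative_eq_intros) auto
  then show "((\<lambda>x. x / (S + x) * R - c * x - \<gamma> / 2 * x\<^sup>2) has_real_derivative R * S / (S + x)\<^sup>2 - c - \<gamma> * x) (at x)"
    by (rule DERIV_cong) (simp add: power2_eq_square)
qed (use assms in \<open>auto simp: contest_payoff_def\<close>)

lemma contest_payoff_tangent_gap:
  assumes "S > 0" "x \<ge> 0" "y \<ge> 0"
  shows "contest_payoff R c \<gamma> S y + (R * S / (S + y)\<^sup>2 - c - \<gamma> * y) * (x - y) - contest_payoff R c \<gamma> S x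
       = R * S * (x - y)\<^sup>2 / ((S + y)\<^sup>2 * (S + x)) + \<gamma> / 2 * (x - y)\<^sup>2"
proof -
  have "S + x > 0" "S + y > 0" using assms by simp_all
  then show ?thesis
    by (simp add: contest_payoff_def divide_simps power2_eq_square) (simp add: algebra_simps)
qed

lemma contest_payoff_max_iff_marginal:
  fixes R c \<gamma> S y :: real
  assumes "S > 0" "y \<ge> 0" "R \<ge> 0" "\<gamma> \<ge> 0"
  defines "m \<equiv> R * S / (S + y)\<^sup>2 - c - \<gamma> * y"
  shows "(\<forall>x\<ge>0. contest_payoff R c \<gamma> S x \<le> contest_payoff R c \<gamma> S y) \<longleftrightarrow> m \<le> 0 \<and> (y > 0 \<longrightarrow> m = 0)"
proof
  assume max: "\<forall>x\<ge>0. contest_payoff R c \<gamma> S x \<le> contest_payoff R c \<gamma> S y"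
  have deriv: "(contest_payoff R c \<gamma> S has_real_derivative m) (at y)"
    unfolding m_def using assms by (intro contest_payoff_has_real_derivative) simp
  have interior: "m = 0" if "y > 0"
  proof (rule DERIV_local_max[OF deriv that], intro allI impI)
    fix z assume "\<bar>y - z\<bar> < y"
    then have "z \<ge> 0" by linarith
    with max show "contest_payoff R c \<gamma> S z \<le> contest_payoff R c \<gamma> S y" by blast
  qed
  have "m \<le> 0"
  proof (rule ccontr)
    assume "\<not> m \<le> 0"
    then obtain d where "d > 0" and "\<forall>t>0. t < d \<longrightarrow> contest_payoff R c \<gamma> S y < contest_payoff R c \<gamma> S (y + t)"
      using DERIV_pos_inc_right[OF deriv] by auto
    then have "contest_payoff R c \<gamma> S y < contest_payoff R c \<gamma> S (y + d / 2)" by simp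
    moreover have "y + d / 2 \<ge> 0" using assms(2) \<open>d > 0\<close> by simp
    ultimately show False using max by fastforce
  qed
  with interior show "m \<le> 0 \<and> (y > 0 \<longrightarrow> m = 0)" by blast
next
  assume marginal: "m \<le> 0 \<and> (y > 0 \<longrightarrow> m = 0)"
  show "\<forall>x\<ge>0. contest_payoff R c \<gamma> S x \<le> contest_payoff R c \<gamma> S y"
  proof (intro allI impI)
    fix x :: real assume "x \<ge> 0"
    have "m * (x - y) \<le> 0"
      using marginal \<open>x \<ge> 0\<close> assms(2) by (cases "y > 0") (auto simp: mult_nonpos_nonneg)
    moreover have "R * S * (x - y)\<^sup>2 / ((S + y)\<^sup>2 * (S + x)) \<ge> 0" "\<gamma> / 2 * (x - y)\<^sup>2 \<ge> 0"
      using assms \<open>x \<ge> 0\<close> by simp_all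
    ultimately show "contest_payoff R c \<gamma> S x \<le> contest_payoff R c \<gamma> S y"
      using contest_payoff_tangent_gap[OF assms(1) \<open>x \<ge> 0\<close> assms(2), of R c \<gamma>]
      unfolding m_def by linarith
  qed
qed

lemma marginal_condition_iff_share:
  fixes R c \<gamma> S y :: real
  assumes "S > 0" "y \<ge> 0" "R > 0" "\<gamma> \<ge> 0"
  defines "m \<equiv> R * S / (S + y)\<^sup>2 - c - \<gamma> * y"
  shows "m \<le> 0 \<and> (y > 0 \<longrightarrow> m = 0) \<longleftrightarrow> y * (R + \<gamma> * (S + y)\<^sup>2) = (S + y) * max 0 (R - c * (S + y))"
proof (cases "y > 0")
  case True
  define H where "H = S + y"
  have "H > 0" "y * (R + \<gamma> * H\<^sup>2) > 0"
    using assms True by (simp_all add: H_def add_pos_nonneg)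
  have "m = 0 \<longleftrightarrow> R * S = (c + \<gamma> * y) * H\<^sup>2"
    using \<open>H > 0\<close> by (simp add: m_def H_def field_simps)
  also have "\<dots> \<longleftrightarrow> y * (R + \<gamma> * H\<^sup>2) = H * (R - c * H)"
    by (simp add: H_def algebra_simps power2_eq_square) (rule eq_commute)
  also have "\<dots> \<longleftrightarrow> y * (R + \<gamma> * H\<^sup>2) = H * max 0 (R - c * H)"
  proof (cases "R - c * H > 0")
    case False
    then have "H * (R - c * H) \<le> 0"
      using \<open>H > 0\<close> by (simp add: mult_nonneg_nonpos)
    then have "y * (R + \<gamma> * H\<^sup>2) \<noteq> H * (R - c * H)" "y * (R + \<gamma> * H\<^sup>2) \<noteq> H * 0"
      using \<open>y * (R + \<gamma> * H\<^sup>2) > 0\<close> by linarith+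
    then show ?thesis
      using False by (simp add: max_def)
  qed simp
  finally show ?thesis
    using True by (auto simp: H_def)
next
  case False
  then have "y = 0" using assms(2) by simp
  have "m \<le> 0 \<longleftrightarrow> R \<le> c * S"
    using assms(1) \<open>y = 0\<close> by (simp add: m_def power2_eq_square pos_divide_le_eq)
  moreover have "S * max 0 (R - c * S) = 0 \<longleftrightarrow> R \<le> c * S"
    using assms(1) by auto
  ultimately show ?thesis
    using \<open>y = 0\<close> by auto
qed

lemma contest_payoff_alone_not_max:
  assumes "y \<ge> 0" "c > 0" "R > 0" "\<gamma> \<ge> 0"
  shows "\<exists>x\<ge>0. contest_payoff R c \<gamma> 0 x > contest_payoff R c \<gamma> 0 y"
proof (cases "y > 0")
  case True
  have "\<gamma> / 2 * (y / 2)\<^sup>2 \<le> \<gamma> / 2 * y\<^sup>2"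
    using assms True by (intro mult_left_mono power_mono) auto
  moreover have "c * (y / 2) < c * y"
    using assms True by simp
  ultimately have "contest_payoff R c \<gamma> 0 (y / 2) > contest_payoff R c \<gamma> 0 y"
    using True by (simp add: contest_payoff_def)
  then show ?thesis
    using True by (intro exI[of _ "y / 2"]) auto
next
  case False
  have "((\<lambda>x. c * x + \<gamma> / 2 * x\<^sup>2) \<longlongrightarrow> 0) (at_right 0)"
    by (auto intro!: tendsto_eq_intros)
  then have "\<forall>\<^sub>F x in at_right 0. c * x + \<gamma> / 2 * x\<^sup>2 < R"
    using assms(3) by (rule order_tendstoD)
  then obtain b where "b > 0" and b: "\<And>x. 0 < x \<Longrightarrow> x < b \<Longrightarrow> c * x + \<gamma> / 2 * x\<^sup>2 < R"
    unfolding eventually_at_right_field by auto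
  have "contest_payoff R c \<gamma> 0 (b / 2) > 0"
    using b[of "b / 2"] \<open>b > 0\<close> by (simp add: contest_payoff_def)
  moreover have "contest_payoff R c \<gamma> 0 y = 0"
    using False by (simp add: contest_payoff_def)
  ultimately show ?thesis
    using \<open>b > 0\<close> by (intro exI[of _ "b / 2"]) auto
qed

lemma contest_payoff_max_iff:
  assumes "S \<ge> 0" "y \<ge> 0" "c > 0" "R > 0" "\<gamma> \<ge> 0"
  shows "(\<forall>x\<ge>0. contest_payoff R c \<gamma> S x \<le> contest_payoff R c \<gamma> S y) \<longleftrightarrow>
         S > 0 \<and> y * (R + \<gamma> * (S + y)\<^sup>2) = (S + y) * max 0 (R - c * (S + y))"
proof (cases "S > 0")
  case True
  then show ?thesis
    using contest_payoff_max_iff_marginal marginal_condition_iff_share assms by simp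
next
  case False
  then have "S = 0" using assms(1) by simp
  then show ?thesis
    using contest_payoff_alone_not_max[OF assms(2-5)] by (auto simp: not_le)
qed

lemma payoff_eq_SUP_iff:
  assumes "i \<in> {1..N}" "\<forall>j\<in>{1..N}. h j \<ge> 0" "c i > 0" "R > 0" "\<gamma> \<ge> 0"
  shows "payoff N c R \<gamma> i h = (SUP x\<in>{0..}. payoff N c R \<gamma> i (h(i := x))) \<longleftrightarrow>
         agg N h - h i > 0 \<and> h i * (R + \<gamma> * (agg N h)\<^sup>2) = agg N h * max 0 (R - c i * agg N h)"
proof -
  define S where "S = agg N h - h i"
  define f where "f = contest_payoff R (c i) \<gamma> S"
  have "S \<ge> 0" "h i \<ge> 0"
    using agg_minus_nonneg[OF assms(1,2)] assms(1,2) by (simp_all add: S_def)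
  have bdd: "bdd_above (f ` {0..})"
    using contest_payoff_le \<open>S \<ge> 0\<close> assms by (intro bdd_aboveI2[of _ _ R]) (auto simp: f_def)
  have "payoff N c R \<gamma> i h = (SUP x\<in>{0..}. payoff N c R \<gamma> i (h(i := x))) \<longleftrightarrow>
        f (h i) = (SUP x\<in>{0..}. f x)"
    unfolding payoff_fun_upd[OF assms(1)] payoff_eq_contest_payoff[OF assms(1), where h = h] f_def S_def ..
  also have "\<dots> \<longleftrightarrow> (\<forall>x\<ge>0. f x \<le> f (h i))"
    using \<open>h i \<ge> 0\<close> cSUP_upper[OF _ bdd] by (auto intro!: cSup_eq_maximum[symmetric])
  also have "\<dots> \<longleftrightarrow> S > 0 \<and> h i * (R + \<gamma> * (S + h i)\<^sup>2) = (S + h i) * max 0 (R - c i * (S + h i))"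
    unfolding f_def using \<open>S \<ge> 0\<close> \<open>h i \<ge> 0\<close> assms by (intro contest_payoff_max_iff) auto
  finally show ?thesis
    by (simp add: S_def)
qed

lemma is_equilibrium_iff:
  assumes "\<forall>i\<in>{1..N}. c i > 0" "R > 0" "\<gamma> \<ge> 0"
  shows "is_equilibrium N c R \<gamma> h \<longleftrightarrow>
         (\<forall>i\<in>{1..N}. h i \<ge> 0 \<and> agg N h - h i > 0 \<and>
            h i * (R + \<gamma> * (agg N h)\<^sup>2) = agg N h * max 0 (R - c i * agg N h))"
  using payoff_eq_SUP_iff assms unfolding is_equilibrium_def by blast

definition aggregate_excess :: "nat \<Rightarrow> (nat \<Rightarrow> real) \<Rightarrow> real \<Rightarrow> real \<Rightarrow> real \<Rightarrow> real" where
  "aggregate_excess N c R \<gamma> H = (\<Sum>i=1..N. max 0 (R - c i * H)) - (R + \<gamma> * H\<^sup>2)"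

definition equilibrium_profile :: "(nat \<Rightarrow> real) \<Rightarrow> real \<Rightarrow> real \<Rightarrow> real \<Rightarrow> nat \<Rightarrow> real" where
  "equilibrium_profile c R \<gamma> H i = H * max 0 (R - c i * H) / (R + \<gamma> * H\<^sup>2)"

lemma agg_equilibrium_profile:
  assumes "R > 0" "\<gamma> \<ge> 0" "aggregate_excess N c R \<gamma> H = 0"
  shows "agg N (equilibrium_profile c R \<gamma> H) = H"
proof -
  have "R + \<gamma> * H\<^sup>2 > 0"
    using assms by (simp add: add_pos_nonneg)
  moreover have "agg N (equilibrium_profile c R \<gamma> H) = H * (\<Sum>i=1..N. max 0 (R - c i * H)) / (R + \<gamma> * H\<^sup>2)"
    by (simp add: agg_def equilibrium_profile_def sum_distrib_left sum_divide_distrib)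
  ultimately show ?thesis
    using assms(3) by (simp add: aggregate_excess_def)
qed

lemma is_equilibrium_equilibrium_profile:
  assumes "\<forall>i\<in>{1..N}. c i > 0" "R > 0" "\<gamma> \<ge> 0" "H > 0" "aggregate_excess N c R \<gamma> H = 0"
  shows "is_equilibrium N c R \<gamma> (equilibrium_profile c R \<gamma> H)"
  unfolding is_equilibrium_iff[OF assms(1-3)] agg_equilibrium_profile[OF assms(2,3,5)]
proof (intro ballI conjI)
  fix i assume i: "i \<in> {1..N}"
  have D: "R + \<gamma> * H\<^sup>2 > 0"
    using assms by (simp add: add_pos_nonneg)
  then show "equilibrium_profile c R \<gamma> H i \<ge> 0"
    using assms by (simp add: equilibrium_profile_def)
  show "equilibrium_profile c R \<gamma> H i * (R + \<gamma> * H\<^sup>2) = H * max 0 (R - c i * H)"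
    using D by (simp add: equilibrium_profile_def)
  have "c i * H > 0" "\<gamma> * H\<^sup>2 \<ge> 0"
    using assms i by simp_all
  then have "max 0 (R - c i * H) < R + \<gamma> * H\<^sup>2"
    unfolding max_less_iff_conj using assms(2) by linarith
  then have "H * max 0 (R - c i * H) < H * (R + \<gamma> * H\<^sup>2)"
    using assms(4) by (rule mult_strict_left_mono)
  then show "H - equilibrium_profile c R \<gamma> H i > 0"
    using D by (simp add: equilibrium_profile_def divide_less_eq)
qed

lemma is_equilibrium_imp_profile:
  assumes "\<forall>i\<in>{1..N}. c i > 0" "R > 0" "\<gamma> \<ge> 0" "N \<ge> 1" "is_equilibrium N c R \<gamma> h"
  shows "agg N h > 0" and "aggregate_excess N c R \<gamma> (agg N h) = 0"
    and "\<forall>i\<in>{1..N}. h i = equilibrium_profile c R \<gamma> (agg N h) i"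
proof -
  let ?H = "agg N h"
  have fixed_point: "h i \<ge> 0" "?H - h i > 0" "h i * (R + \<gamma> * ?H\<^sup>2) = ?H * max 0 (R - c i * ?H)"
    if "i \<in> {1..N}" for i
    using assms(5) that unfolding is_equilibrium_iff[OF assms(1-3)] by blast+
  have D: "R + \<gamma> * ?H\<^sup>2 > 0"
    using assms by (simp add: add_pos_nonneg)
  show profile: "\<forall>i\<in>{1..N}. h i = equilibrium_profile c R \<gamma> ?H i"
  proof
    fix i assume "i \<in> {1..N}"
    then show "h i = equilibrium_profile c R \<gamma> ?H i"
      using fixed_point(3) D by (simp add: equilibrium_profile_def eq_divide_eq)
  qed
  have "1 \<in> {1..N}"
    using assms(4) by simp
  then show "?H > 0"
    using fixed_point(1,2) by fastforce
  have "?H = (\<Sum>i=1..N. h i)"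
    by (simp add: agg_def)
  also have "\<dots> = (\<Sum>i=1..N. equilibrium_profile c R \<gamma> ?H i)"
    using profile by (intro sum.cong) auto
  also have "\<dots> = ?H * (\<Sum>i=1..N. max 0 (R - c i * ?H)) / (R + \<gamma> * ?H\<^sup>2)"
    by (simp add: equilibrium_profile_def sum_distrib_left sum_divide_distrib)
  finally have "?H * (R + \<gamma> * ?H\<^sup>2) = ?H * (\<Sum>i=1..N. max 0 (R - c i * ?H))"
    using D by (simp add: eq_divide_eq)
  then show "aggregate_excess N c R \<gamma> ?H = 0"
    using \<open>?H > 0\<close> by (simp add: aggregate_excess_def)
qed

lemma aggregate_excess_strict_decreasing:
  assumes "\<forall>i\<in>{1..N}. c i > 0" "R > 0" "\<gamma> \<ge> 0" "0 \<le> H1" "H1 < H2"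
    and "aggregate_excess N c R \<gamma> H2 \<ge> 0"
  shows "aggregate_excess N c R \<gamma> H2 < aggregate_excess N c R \<gamma> H1"
proof -
  have le: "max 0 (R - c i * H2) \<le> max 0 (R - c i * H1)" if "i \<in> {1..N}" for i
    using assms that by (intro max.mono) auto
  have "(\<Sum>i=1..N. max 0 (R - c i * H2)) \<ge> R + \<gamma> * H2\<^sup>2"
    using assms(6) by (simp add: aggregate_excess_def)
  moreover have "R + \<gamma> * H2\<^sup>2 > 0"
    using assms by (simp add: add_pos_nonneg)
  ultimately have "(\<Sum>i=1..N. max 0 (R - c i * H2)) > 0"
    by linarith
  then obtain k where k: "k \<in> {1..N}" "max 0 (R - c k * H2) > 0"
    by (metis not_le sum_nonpos)
  moreover have "c k * H1 < c k * H2"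
    using assms k by simp
  ultimately have "max 0 (R - c k * H2) < max 0 (R - c k * H1)"
    by (simp add: less_max_iff_disj)
  then have "(\<Sum>i=1..N. max 0 (R - c i * H2)) < (\<Sum>i=1..N. max 0 (R - c i * H1))"
    using le k(1) by (intro sum_strict_mono_ex1) blast+
  moreover have "\<gamma> * H1\<^sup>2 \<le> \<gamma> * H2\<^sup>2"
    using assms by (intro mult_left_mono power_mono) auto
  ultimately show ?thesis
    by (simp add: aggregate_excess_def)
qed

lemma aggregate_excess_root_unique:
  assumes "\<forall>i\<in>{1..N}. c i > 0" "R > 0" "\<gamma> \<ge> 0" "0 \<le> H1" "0 \<le> H2"
    and "aggregate_excess N c R \<gamma> H1 = 0" "aggregate_excess N c R \<gamma> H2 = 0"
  shows "H1 = H2"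
  using aggregate_excess_strict_decreasing[OF assms(1-3), of H1 H2]
    aggregate_excess_strict_decreasing[OF assms(1-3), of H2 H1] assms(4-7)
  by (cases H1 H2 rule: linorder_cases) auto

lemma aggregate_excess_root_exists:
  assumes "N \<ge> 2" "c 1 > 0" "mono_on {1..N} c" "R > 0" "\<gamma> \<ge> 0"
  shows "\<exists>H>0. aggregate_excess N c R \<gamma> H = 0"
proof -
  have "aggregate_excess N c R \<gamma> 0 = (real N - 1) * R"
    using assms(4) by (simp add: aggregate_excess_def algebra_simps)
  moreover have "(real N - 1) * R > 0"
    using assms by simp
  ultimately have at_0: "aggregate_excess N c R \<gamma> 0 > 0" by simp
  have "max 0 (R - c i * (R / c 1)) = 0" if "i \<in> {1..N}" for i
  proof -
    have "c 1 \<le> c i"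
      using that by (intro mono_onD[OF assms(3)]) auto
    then show ?thesis
      using assms mult_left_mono[of "c 1" "c i" R] by (simp add: field_simps)
  qed
  then have "aggregate_excess N c R \<gamma> (R / c 1) = - (R + \<gamma> * (R / c 1)\<^sup>2)"
    by (simp add: aggregate_excess_def)
  moreover have "\<gamma> * (R / c 1)\<^sup>2 \<ge> 0"
    using assms by simp
  ultimately have "aggregate_excess N c R \<gamma> (R / c 1) \<le> 0"
    using assms by linarith
  moreover have "isCont (aggregate_excess N c R \<gamma>) x" for x
    unfolding aggregate_excess_def by (intro continuous_intros)
  moreover have "0 \<le> R / c 1"
    using assms by simp
  ultimately obtain H where "0 \<le> H" and root: "aggregate_excess N c R \<gamma> H = 0"
    using IVT2[of "aggregate_excess N c R \<gamma>" "R / c 1" 0 0] at_0 by auto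
  moreover have "H \<noteq> 0"
    using at_0 root by auto
  ultimately show ?thesis
    by (intro exI[of _ H]) auto
qed

lemma down_closed_initial_segment:
  fixes P :: "nat \<Rightarrow> bool"
  assumes "\<And>i j. 1 \<le> i \<Longrightarrow> i \<le> j \<Longrightarrow> j \<le> N \<Longrightarrow> P j \<Longrightarrow> P i"
  shows "\<exists>n\<le>N. \<forall>i\<in>{1..N}. P i \<longleftrightarrow> i \<le> n"
proof -
  define A where "A = insert 0 {i\<in>{1..N}. P i}"
  have "finite A" "A \<noteq> {}"
    by (simp_all add: A_def)
  have "Max A \<le> N"
    using \<open>finite A\<close> by (auto simp: A_def)
  moreover have "P i \<longleftrightarrow> i \<le> Max A" if "i \<in> {1..N}" for i
  proof
    assume "P i"
    then show "i \<le> Max A"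
      using \<open>finite A\<close> that by (intro Max_ge) (auto simp: A_def)
  next
    assume "i \<le> Max A"
    moreover have "Max A \<in> A"
      using \<open>finite A\<close> \<open>A \<noteq> {}\<close> by (rule Max_in)
    ultimately have "P (Max A)" "Max A \<le> N"
      using that by (auto simp: A_def)
    then show "P i"
      using assms \<open>i \<le> Max A\<close> that by auto
  qed
  ultimately show ?thesis
    by blast
qed

lemma aggregate_root_active_prefix:
  assumes "mono_on {1..N} c"
    and "c 1 > 0" "R > 0" "\<gamma> \<ge> 0" "H > 0" "aggregate_excess N c R \<gamma> H = 0"
  shows "\<exists>n. 2 \<le> n \<and> n \<le> N \<and> (\<forall>i\<in>{1..N}. c i * H < R \<longleftrightarrow> i \<le> n)
           \<and> real n * R - (\<Sum>i=1..n. c i) * H = R + \<gamma> * H\<^sup>2"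
proof -
  have "c i * H < R" if "1 \<le> i" "i \<le> j" "j \<le> N" "c j * H < R" for i j
  proof -
    have "c i \<le> c j"
      using that(1-3) by (intro mono_onD[OF assms(1)]) auto
    then show ?thesis
      using mult_right_mono[of "c i" "c j" H] \<open>H > 0\<close> that(4) by linarith
  qed
  then obtain n where "n \<le> N" and active: "\<forall>i\<in>{1..N}. c i * H < R \<longleftrightarrow> i \<le> n"
    using down_closed_initial_segment[of N "\<lambda>i. c i * H < R"] by blast
  have "(\<Sum>i=1..N. max 0 (R - c i * H)) = (\<Sum>i=1..n. max 0 (R - c i * H))"
    using \<open>n \<le> N\<close> active by (intro sum.mono_neutral_right) auto
  also have "\<dots> = (\<Sum>i=1..n. R - c i * H)"
    using \<open>n \<le> N\<close> active by (intro sum.cong) auto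
  also have "\<dots> = real n * R - (\<Sum>i=1..n. c i) * H"
    by (simp add: sum_subtractf sum_distrib_right)
  finally have balance: "real n * R - (\<Sum>i=1..n. c i) * H = R + \<gamma> * H\<^sup>2"
    using assms(6) by (simp add: aggregate_excess_def)
  have "\<gamma> * H\<^sup>2 \<ge> 0" "c 1 * H > 0"
    using assms by simp_all
  moreover have "n = 0 \<Longrightarrow> R + \<gamma> * H\<^sup>2 = 0" "n = 1 \<Longrightarrow> R - c 1 * H = R + \<gamma> * H\<^sup>2"
    using balance by simp_all
  ultimately have "n \<noteq> 0" "n \<noteq> 1"
    using \<open>R > 0\<close> by linarith+
  then show ?thesis
    using balance \<open>n \<le> N\<close> active by (intro exI[of _ n]) auto
qed

lemma aggregate_closed_form:
  fixes H cn R \<gamma> :: real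
  assumes "H > 0" "cn > 0" "\<gamma> \<ge> 0" "real n * R - cn * H = R + \<gamma> * H\<^sup>2"
  shows "H = (if \<gamma> > 0 then (sqrt (cn\<^sup>2 + 4 * (real n - 1) * R * \<gamma>) - cn) / (2 * \<gamma>)
              else (real n - 1) * R / cn)"
proof (cases "\<gamma> > 0")
  case True
  have balance: "(real n - 1) * R = \<gamma> * H\<^sup>2 + cn * H"
    using assms(4) by (simp add: algebra_simps)
  have "(2 * \<gamma> * H + cn)\<^sup>2 = cn\<^sup>2 + 4 * (\<gamma> * H\<^sup>2 + cn * H) * \<gamma>"
    by (simp add: algebra_simps power2_eq_square)
  also have "\<dots> = cn\<^sup>2 + 4 * (real n - 1) * R * \<gamma>"
    by (simp add: balance[symmetric] mult.assoc)
  finally have "(2 * \<gamma> * H + cn)\<^sup>2 = cn\<^sup>2 + 4 * (real n - 1) * R * \<gamma>" .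
  then have "sqrt (cn\<^sup>2 + 4 * (real n - 1) * R * \<gamma>) = 2 * \<gamma> * H + cn"
    using True assms by (intro real_sqrt_unique) auto
  then show ?thesis
    using True by simp
next
  case False
  then show ?thesis
    using assms by (simp add: field_simps)
qed

lemma equilibrium_profile_active_prefix:
  assumes "mono_on {1..N} c"
    and "c 1 > 0" "R > 0" "\<gamma> \<ge> 0" "H > 0" "aggregate_excess N c R \<gamma> H = 0"
  shows "\<exists>n. 2 \<le> n \<and> n \<le> N
           \<and> (\<forall>i\<in>{1..n}. equilibrium_profile c R \<gamma> H i = H * (R - c i * H) / (R + \<gamma> * H\<^sup>2))
           \<and> (\<forall>i\<in>{n<..N}. equilibrium_profile c R \<gamma> H i = 0)
           \<and> H = (if \<gamma> > 0 then (sqrt ((\<Sum>i=1..n. c i)\<^sup>2 + 4 * (real n - 1) * R * \<gamma>) - (\<Sum>i=1..n. c i)) / (2 * \<gamma>)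
                  else (real n - 1) * R / (\<Sum>i=1..n. c i))"
proof -
  obtain n where "2 \<le> n" "n \<le> N" and active: "\<forall>i\<in>{1..N}. c i * H < R \<longleftrightarrow> i \<le> n"
    and balance: "real n * R - (\<Sum>i=1..n. c i) * H = R + \<gamma> * H\<^sup>2"
    using aggregate_root_active_prefix[OF assms] by blast
  have "(\<Sum>i=1..n. c i) > 0"
    using mono_onD[OF assms(1), of 1] assms(2) \<open>2 \<le> n\<close> \<open>n \<le> N\<close>
    by (intro sum_pos) (auto intro: less_le_trans)
  note closed_form = aggregate_closed_form[OF \<open>H > 0\<close> this assms(4) balance]
  have active_rate: "\<forall>i\<in>{1..n}. equilibrium_profile c R \<gamma> H i = H * (R - c i * H) / (R + \<gamma> * H\<^sup>2)"
    using active \<open>n \<le> N\<close> by (auto simp: equilibrium_profile_def)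
  have inactive_rate: "\<forall>i\<in>{n<..N}. equilibrium_profile c R \<gamma> H i = 0"
  proof
    fix i assume "i \<in> {n<..N}"
    then have "i \<in> {1..N}" "\<not> i \<le> n"
      using \<open>2 \<le> n\<close> by auto
    then have "R \<le> c i * H"
      using active by auto
    then show "equilibrium_profile c R \<gamma> H i = 0"
      by (simp add: equilibrium_profile_def)
  qed
  show ?thesis
    using \<open>2 \<le> n\<close> \<open>n \<le> N\<close> active_rate inactive_rate closed_form
    by (intro exI[of _ n] conjI)
qed

lemma is_equilibrium_unique:
  assumes "\<forall>i\<in>{1..N}. c i > 0" "R > 0" "\<gamma> \<ge> 0" "N \<ge> 1" "H > 0"
    and "aggregate_excess N c R \<gamma> H = 0" "is_equilibrium N c R \<gamma> h"
  shows "\<forall>i\<in>{1..N}. h i = equilibrium_profile c R \<gamma> H i"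
proof -
  note profile = is_equilibrium_imp_profile[OF assms(1-4,7)]
  have "agg N h = H"
    using aggregate_excess_root_unique[OF assms(1-3) _ _ profile(2) assms(6)] profile(1) \<open>H > 0\<close>
    by simp
  then show ?thesis
    using profile(3) by simp
qed

theorem proposition4p1:
  fixes N :: nat and c :: "nat \<Rightarrow> real" and R \<gamma> :: real
  assumes "N \<ge> 2"
    and "c 1 > 0"
    and "\<And>i j. 1 \<le> i \<Longrightarrow> i \<le> j \<Longrightarrow> j \<le> N \<Longrightarrow> c i \<le> c j"
    and "R > 0" and "\<gamma> \<ge> 0"
  shows "\<exists>h. is_equilibrium N c R \<gamma> h
           \<and> (\<forall>h'. is_equilibrium N c R \<gamma> h' \<longrightarrow> (\<forall>i\<in>{1..N}. h' i = h i))
           \<and> (\<exists>n::nat. 2 \<le> n \<and> n \<le> N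
                \<and> (let H = agg N h; cn = (\<Sum>i=1..n. c i) in
                     (\<forall>i\<in>{1..n}. h i = H * (R - c i * H) / (R + \<gamma> * H^2))
                   \<and> (\<forall>i\<in>{n<..N}. h i = 0)
                   \<and> H = (if \<gamma> > 0 then (sqrt (cn^2 + 4 * (real n - 1) * R * \<gamma>) - cn) / (2 * \<gamma>)
                          else (real n - 1) * R / cn)))"
proof -
  have mono: "mono_on {1..N} c"
    using assms(3) by (auto intro: mono_onI)
  have cpos: "\<forall>i\<in>{1..N}. c i > 0"
    using assms(2) assms(3)[of 1] by (auto intro: less_le_trans)
  obtain H where "H > 0" and root: "aggregate_excess N c R \<gamma> H = 0"
    using aggregate_excess_root_exists[OF assms(1,2) mono assms(4,5)] by blast
  define h where "h = equilibrium_profile c R \<gamma> H"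
  have "agg N h = H"
    unfolding h_def using agg_equilibrium_profile assms(4,5) root .
  moreover have "is_equilibrium N c R \<gamma> h"
    unfolding h_def using cpos assms(4,5) \<open>H > 0\<close> root by (rule is_equilibrium_equilibrium_profile)
  moreover have "\<forall>i\<in>{1..N}. h' i = h i" if "is_equilibrium N c R \<gamma> h'" for h'
    unfolding h_def using cpos assms(4,5) _ \<open>H > 0\<close> root that
    by (rule is_equilibrium_unique) (use assms(1) in simp)
  moreover note equilibrium_profile_active_prefix[OF mono assms(2,4,5) \<open>H > 0\<close> root, folded h_def]
  ultimately show ?thesis
    unfolding Let_def by blast
qed

end
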